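(* Let $\mathbf{C}\in\mathbb{R}^{n\times n}$ (discrete curl), $\tilde{\mathbf{S}}\in\mathbb{R}^{m\times n}$ (discrete divergence, $-\tilde{\mathbf{S}}^\top$ discrete gradient), $\mathbf{M}_\mu\in\mathbb{R}^{n\times n}$ symmetric positive definite, $\mathbf{M}_\rho\in\mathbb{R}^{n\times n}$, $\mathbf{P}\in\mathbb{R}^{n\times k}$ (reduced cotree projection of a tree-cotree gauge) and $\mathbf{Y}_\mathrm{s}\in\mathbb{R}^{n\times n_\mathrm{s}}$ (discrete winding function) satisfy: $\ker\tilde{\mathbf{S}}^\top=\{\mathbf{0}\}$; $\mathbf{C}\tilde{\mathbf{S}}^\top=\mathbf{0}$ and $\ker\tilde{\mathbf{S}}=\mathrm{im}\,\mathbf{C}^\top$; $\mathbf{K}_\rho=\mathbf{P}^\top\mathbf{C}^\top\mathbf{M}_\rho\mathbf{C}\mathbf{P}$ is nonsingular; and for all $\mathbf{x}\in\mathbb{R}^{n_\mathrm{s}}\setminus\{\mathbf{0}\}$, $\mathbf{y}\in\mathbb{R}^{k}\setminus\{\mathbf{0}\}$: $\mathbf{C}\mathbf{Y}_\mathrm{s}\mathbf{x}\neq\mathbf{0}$ and $\mathbf{C}\mathbf{Y}_\mathrm{s}\mathbf{x}\neq\mathbf{C}\mathbf{P}\mathbf{y}$. Then the gauged, spatially discretised T-$\Omega$ system with circuit coupling \begin{align*} \mathbf{K}_\rho\mathbf{t}_\mathrm{red}+\mathbf{P}^\top\mathbf{M}_\mu\big(\mathbf{P}\tfrac{\mathrm{d}}{\mathrm{d}t}\mathbf{t}_\mathrm{red}+\tilde{\mathbf{S}}^\top\tfrac{\mathrm{d}}{\mathrm{d}t}\Psi+\mathbf{Y}_\mathrm{s}\tfrac{\mathrm{d}}{\mathrm{d}t}\mathbf{i}_\mathrm{s}\big)&=0,\\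 \tilde{\mathbf{S}}\mathbf{M}_\mu\big(\mathbf{P}\mathbf{t}_\mathrm{red}+\tilde{\mathbf{S}}^\top\Psi+\mathbf{Y}_\mathrm{s}\mathbf{i}_\mathrm{s}\big)&=0,\\ \mathbf{Y}_\mathrm{s}^\top\mathbf{M}_\mu\big(\mathbf{P}\tfrac{\mathrm{d}}{\mathrm{d}t}\mathbf{t}_\mathrm{red}+\tilde{\mathbf{S}}^\top\tfrac{\mathrm{d}}{\mathrm{d}t}\Psi+\mathbf{Y}_\mathrm{s}\tfrac{\mathrm{d}}{\mathrm{d}t}\mathbf{i}_\mathrm{s}\big)-\mathbf{v}_\mathrm{s}&=0, \end{align*} with unknowns $\mathbf{x}_\lambda=(\mathbf{t}_\mathrm{red},\Psi)$, current $\mathbf{i}_\lambda=\mathbf{i}_\mathrm{s}$ and voltage $\mathbf{v}_\lambda=\mathbf{v}_\mathrm{s}$, is an inductance-like element.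
   Context: Positive definite means $\mathbf{x}^\top\mathbf{M}\mathbf{x}>0$ for $\mathbf{x}\ne0$. Inductance-like element: a device described by a DAE $\mathbf{F}(\frac{\mathrm{d}}{\mathrm{d}t}\mathbf{x}_\lambda,\frac{\mathrm{d}}{\mathrm{d}t}\mathbf{i}_\lambda,\mathbf{x}_\lambda,\mathbf{i}_\lambda,\mathbf{v}_\lambda,t)=0$ with $\mathbf{x}_\lambda:\mathcal{I}\to\mathbb{R}^{n_\mathrm{dof}}$, $\mathbf{i}_\lambda,\mathbf{v}_\lambda:\mathcal{I}\to\mathbb{R}^{n_\lambda}$, such that at most one differentiation $\frac{\mathrm{d}}{\mathrm{d}t}\mathbf{F}=0$ is needed to obtain from $\mathbf{F}=0$ and $\frac{\mathrm{d}}{\mathrm{d}t}\mathbf{F}=0$ (by algebraic manipulations) a system $\frac{\mathrm{d}}{\mathrm{d}t}\mathbf{x}_\lambda=\mathbf{f}_\mathbf{x}(\mathbf{x}_\lambda,\mathbf{i}_\lambda,\mathbf{v}_\lambda,t)$, $\frac{\mathrm{d}}{\mathrm{d}t}\phi(\mathbf{i}_\lambda,\mathbf{x}_\lambda,t)=\mathbf{f}_\phi(\mathbf{x}_\lambda,\mathbf{i}_\lambda,\mathbf{v}_\lambda,t)$, where $\partial\phi/\partial\mathbf{i}_\lambda$ is regular and $\frac{\partial}{\partial\mathbf{v}_\lambda}\Big((\frac{\partial\phi}{\partial\mathbf{i}_\lambda})^{-1}(-\frac{\partial\phi}{\partial\mathbf{x}_\lambda}\mathbf{f}_\mathbf{x}-\frac{\partial\phi}{\partial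 t}+\mathbf{f}_\phi)\Big)$ is positive definite. Here $\mathbf{t}_\mathrm{red}$ are the gauged degrees of freedom of the electric vector potential in the conducting region, $\Psi$ those of the magnetic scalar potential, $\mathbf{i}_\mathrm{s},\mathbf{v}_\mathrm{s}$ the coil currents and voltages. *)

theory Defs
  imports "HOL-Analysis.Analysis"
begin

definition pos_def_map :: "('i::real_inner \<Rightarrow> 'i) \<Rightarrow> bool" where
  "pos_def_map L \<longleftrightarrow> (\<forall>h. h \<noteq> 0 \<longrightarrow> h \<bullet> L h > 0)"

text \<open>The jets (derivative values) are treated as independent
  algebraic variables; "obtained by algebraic manipulations from F = 0 (and dF/dt = 0)"
  is rendered as "is a logical consequence of".  The total time derivative of F is
  D F (x'', i'', x', i', v', 1).\<close>

definition phi_di :: "('i::real_normed_vector \<times> 'x::real_normed_vector \<times> real \<Rightarrow> 'i)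
    \<Rightarrow> 'i \<Rightarrow> 'x \<Rightarrow> real \<Rightarrow> 'i \<Rightarrow> 'i" where
  "phi_di phi i x t = (\<lambda>h. frechet_derivative phi (at (i, x, t)) (h, 0, 0))"

definition phi_dx :: "('i::real_normed_vector \<times> 'x::real_normed_vector \<times> real \<Rightarrow> 'i)
    \<Rightarrow> 'i \<Rightarrow> 'x \<Rightarrow> real \<Rightarrow> 'x \<Rightarrow> 'i" where
  "phi_dx phi i x t = (\<lambda>h. frechet_derivative phi (at (i, x, t)) (0, h, 0))"

definition phi_dt :: "('i::real_normed_vector \<times> 'x::real_normed_vector \<times> real \<Rightarrow> 'i)
    \<Rightarrow> 'i \<Rightarrow> 'x \<Rightarrow> real \<Rightarrow> 'i" where
  "phi_dt phi i x t = frechet_derivative phi (at (i, x, t)) (0, 0, 1)"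

definition reduced_system ::
  "('x \<Rightarrow> 'i \<Rightarrow> 'i \<Rightarrow> real \<Rightarrow> 'x) \<Rightarrow> ('x \<Rightarrow> 'i \<Rightarrow> 'i \<Rightarrow> real \<Rightarrow> 'i)
   \<Rightarrow> ('i::real_normed_vector \<times> 'x::real_normed_vector \<times> real \<Rightarrow> 'i)
   \<Rightarrow> 'x \<Rightarrow> 'i \<Rightarrow> 'x \<Rightarrow> 'i \<Rightarrow> 'i \<Rightarrow> real \<Rightarrow> bool" where
  "reduced_system fx fphi phi dx di x i v t \<longleftrightarrow>
     dx = fx x i v t \<and>
     frechet_derivative phi (at (i, x, t)) (di, dx, 1) = fphi x i v t"

definition inductance_like ::
  "('x::euclidean_space \<times> 'i::euclidean_space \<times> 'x \<times> 'i \<times> 'i \<times> real \<Rightarrow> 'r::real_normed_vector)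
   \<Rightarrow> bool" where
  "inductance_like F \<longleftrightarrow>
    (\<exists>(fx :: 'x \<Rightarrow> 'i \<Rightarrow> 'i \<Rightarrow> real \<Rightarrow> 'x) (fphi :: 'x \<Rightarrow> 'i \<Rightarrow> 'i \<Rightarrow> real \<Rightarrow> 'i)
        (phi :: 'i \<times> 'x \<times> real \<Rightarrow> 'i).
       (\<forall>p. phi differentiable (at p)) \<and>
       (\<forall>i x t. bij (phi_di phi i x t)) \<and>
       (\<forall>x i t v.
          (\<lambda>w. inv (phi_di phi i x t)
                 (- phi_dx phi i x t (fx x i w t) - phi_dt phi i x t + fphi x i w t))
            differentiable (at v) \<and>
          pos_def_map (frechet_derivative
            (\<lambda>w. inv (phi_di phi i x t)
                   (- phi_dx phi i x t (fx x i w t) - phi_dt phi i x t + fphi x i w t))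
            (at v))) \<and>
       ((\<forall>dx di x i v t. F (dx, di, x, i, v, t) = 0 \<longrightarrow>
            reduced_system fx fphi phi dx di x i v t)
        \<or>
        ((\<forall>p. F differentiable (at p)) \<and>
         (\<forall>dx di x i v t ddx ddi dv.
            F (dx, di, x, i, v, t) = 0 \<longrightarrow>
            frechet_derivative F (at (dx, di, x, i, v, t)) (ddx, ddi, dx, di, dv, 1) = 0 \<longrightarrow>
            reduced_system fx fphi phi dx di x i v t))))"

definition TOmega_DAE ::
  "real^'n^'n \<Rightarrow> real^'n^'m \<Rightarrow> real^'n^'n \<Rightarrow> real^'n^'n \<Rightarrow> real^'k^'n \<Rightarrow> real^'s^'n
   \<Rightarrow> (((real^'k) \<times> (real^'m)) \<times> (real^'s) \<times> ((real^'k) \<times> (real^'m)) \<times> (real^'s) \<times> (real^'s) \<times> real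
       \<Rightarrow> (real^'k) \<times> (real^'m) \<times> (real^'s))" where
  "TOmega_DAE C S M\<^sub>\<mu> M\<^sub>\<rho> P Y =
     (\<lambda>((dtr, d\<Psi>), di, (tr, \<Psi>), i, v, t).
        let K\<^sub>\<rho> = transpose P ** transpose C ** M\<^sub>\<rho> ** C ** P;
            dB = P *v dtr + transpose S *v d\<Psi> + Y *v di;
            B = P *v tr + transpose S *v \<Psi> + Y *v i
        in (K\<^sub>\<rho> *v tr + transpose P *v (M\<^sub>\<mu> *v dB),
            S *v (M\<^sub>\<mu> *v B),
            transpose Y *v (M\<^sub>\<mu> *v dB) - v))"

end

theory Submission
  imports Defs
begin

(* The system is linear, and differentiating its second, algebraic equation once shows that the
   jets u = (t_red', Psi', i_s') solve J^T M_mu J u = (-K_rho t_red, 0, v_s), where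
   J u = P t_red' + S^T Psi' + Y_s i_s'. The gauge hypotheses make J injective, so J^T M_mu J is
   positive definite. With phi(i, x, t) = i the reduced system is just the solution of this linear
   system, and the derivative of i_s' with respect to v_s is the lower right block of
   (J^T M_mu J)^-1, which inherits positive definiteness from J^T M_mu J. *)

lemma inner_transpose_mult_vec_left: "(transpose A *v x) \<bullet> y = x \<bullet> (A *v (y::real^'n))"
  by (simp add: dot_lmul_matrix)

lemma inner_transpose_mult_vec_right: "x \<bullet> (transpose A *v y) = (A *v (x::real^'n)) \<bullet> y"
  by (metis inner_commute inner_transpose_mult_vec_left)

declare transpose_matrix_vector [simp del]

lemma invertible_mult_vec_eq_0_iff: "invertible (K::real^'n^'n) \<Longrightarrow> K *v x = 0 \<longleftrightarrow> x = 0"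
  by (metis invertible_left_inverse matrix_left_invertible_ker matrix_vector_mult_0_right)

lemma pos_def_map_imp_bij:
  fixes A :: "'a::euclidean_space \<Rightarrow> 'a"
  assumes "linear A" and "pos_def_map A"
  shows "bij A"
proof -
  have "inj A"
    unfolding linear_injective_0[OF \<open>linear A\<close>]
    using \<open>pos_def_map A\<close> by (metis pos_def_map_def inner_zero_right less_irrefl)
  then show ?thesis
    using \<open>linear A\<close> by (simp add: bij_def linear_injective_imp_surjective)
qed

lemma pos_def_map_snd_inv:
  fixes A :: "'a::euclidean_space \<times> 'b::euclidean_space \<Rightarrow> 'a \<times> 'b"
  assumes "linear A" and "pos_def_map A"
  shows "pos_def_map (\<lambda>w. snd (inv A (0, w)))"
  unfolding pos_def_map_def
proof (intro allI impI)
  fix h :: 'b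
  assume "h \<noteq> 0"
  define u where "u = inv A (0, h)"
  have Au: "A u = (0, h)"
    using pos_def_map_imp_bij[OF assms] by (simp add: u_def bij_is_surj surj_f_inv_f)
  then have "u \<noteq> 0"
    using \<open>h \<noteq> 0\<close> linear_0[OF \<open>linear A\<close>] by (auto simp: zero_prod_def)
  then have "0 < u \<bullet> A u"
    using \<open>pos_def_map A\<close> unfolding pos_def_map_def by blast
  also have "u \<bullet> A u = h \<bullet> snd u"
    by (simp add: Au inner_Pair_0 inner_commute)
  finally show "0 < h \<bullet> snd (inv A (0, h))"
    by (simp add: u_def)
qed

lemma inductance_like_if_jets_solve_pos_def_system:
  fixes F :: "'x::euclidean_space \<times> 'i::euclidean_space \<times> 'x \<times> 'i \<times> 'i \<times> real
      \<Rightarrow> 'r::real_normed_vector"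
    and A :: "'x \<times> 'i \<Rightarrow> 'x \<times> 'i" and g :: "'x \<Rightarrow> 'i \<Rightarrow> real \<Rightarrow> 'x"
  assumes A: "linear A" "pos_def_map A"
    and F_diff: "\<And>p. F differentiable (at p)"
    and jets: "\<And>dx di x i v t ddx ddi dv. F (dx, di, x, i, v, t) = 0 \<Longrightarrow>
      frechet_derivative F (at (dx, di, x, i, v, t)) (ddx, ddi, dx, di, dv, 1) = 0 \<Longrightarrow>
      A (dx, di) = (g x i t, v)"
  shows "inductance_like F"
proof -
  define phi :: "'i \<times> 'x \<times> real \<Rightarrow> 'i" where "phi = fst"
  define fx :: "'x \<Rightarrow> 'i \<Rightarrow> 'i \<Rightarrow> real \<Rightarrow> 'x"
    where "fx x i v t = fst (inv A (g x i t, v))" for x i v t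
  define fphi :: "'x \<Rightarrow> 'i \<Rightarrow> 'i \<Rightarrow> real \<Rightarrow> 'i"
    where "fphi x i v t = snd (inv A (g x i t, v))" for x i v t
  define L :: "'i \<Rightarrow> 'i" where "L w = snd (inv A (0, w))" for w
  have bij_A: "bij A"
    using pos_def_map_imp_bij[OF A] .
  have inv_A: "linear (inv A)"
    using A(1) bij_A by (simp add: bij_is_inj inj_linear_imp_inv_linear)
  have L: "linear L"
  proof -
    have "linear (\<lambda>w::'i. (0::'x, w))"
      by (rule linearI) simp_all
    then show ?thesis
      using linear_compose[OF linear_compose[OF _ inv_A] linear_snd]
      by (simp add: L_def[abs_def] o_def)
  qed
  have "frechet_derivative phi (at p) = fst" for p
    unfolding phi_def
    by (rule frechet_derivative_at[symmetric])
      (simp add: bounded_linear_fst bounded_linear_imp_has_derivative)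
  then have phi_partials: "phi_di phi i x t = id" "phi_dx phi i x t = (\<lambda>h. 0)" "phi_dt phi i x t = 0"
    and phi_total: "frechet_derivative phi (at (i, x, t)) (di, dx, 1) = di" for i x t di dx
    by (simp_all add: phi_di_def phi_dx_def phi_dt_def id_def)
  have fphi_split: "fphi x i w t = fphi x i 0 t + L w" for x i w t
    using linear_add[OF inv_A, of "(g x i t, 0)" "(0, w)"] by (simp add: fphi_def L_def)
  have fphi_deriv: "((\<lambda>w. fphi x i w t) has_derivative L) (at v)" for x i t v
  proof -
    have "((\<lambda>w. fphi x i 0 t + L w) has_derivative (\<lambda>w. 0 + L w)) (at v)"
      using L by (intro derivative_intros bounded_linear_imp_has_derivative)
        (simp add: linear_conv_bounded_linear)
    then show ?thesis by (simp add: fphi_split[symmetric])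
  qed
  show ?thesis
    unfolding inductance_like_def
  proof (intro exI[of _ fx] exI[of _ fphi] exI[of _ phi] conjI disjI2 allI impI)
    show "phi differentiable (at p)" for p
      unfolding phi_def by (simp add: bounded_linear_fst bounded_linear_imp_differentiable)
    show "bij (phi_di phi i x t)" for i x t
      by (simp add: phi_partials)
    show "(\<lambda>w. inv (phi_di phi i x t)
        (- phi_dx phi i x t (fx x i w t) - phi_dt phi i x t + fphi x i w t)) differentiable (at v)"
      for x i t v
      using fphi_deriv by (simp add: phi_partials differentiable_def) blast
    show "pos_def_map (frechet_derivative (\<lambda>w. inv (phi_di phi i x t)
        (- phi_dx phi i x t (fx x i w t) - phi_dt phi i x t + fphi x i w t)) (at v))" for x i t v
      using frechet_derivative_at[OF fphi_deriv] pos_def_map_snd_inv[OF A]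
      by (simp add: phi_partials L_def[abs_def])
    show "F differentiable (at p)" for p
      by (rule F_diff)
    fix dx di x i v t ddx ddi dv
    assume "F (dx, di, x, i, v, t) = 0"
      and "frechet_derivative F (at (dx, di, x, i, v, t)) (ddx, ddi, dx, di, dv, 1) = 0"
    then have "inv A (g x i t, v) = (dx, di)"
      using jets bij_A by (metis bij_is_inj inv_f_f)
    then show "reduced_system fx fphi phi dx di x i v t"
      by (simp add: reduced_system_def fx_def fphi_def phi_total)
  qed
qed

definition TOmega_field :: "real^'k^'n \<Rightarrow> real^'n^'m \<Rightarrow> real^'s^'n
    \<Rightarrow> ((real^'k) \<times> (real^'m)) \<times> (real^'s) \<Rightarrow> real^'n" where
  "TOmega_field P S Y = (\<lambda>((tr, \<Psi>), i). P *v tr + transpose S *v \<Psi> + Y *v i)"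

definition TOmega_inductance :: "real^'n^'n \<Rightarrow> real^'k^'n \<Rightarrow> real^'n^'m \<Rightarrow> real^'s^'n
    \<Rightarrow> ((real^'k) \<times> (real^'m)) \<times> (real^'s) \<Rightarrow> ((real^'k) \<times> (real^'m)) \<times> (real^'s)" where
  "TOmega_inductance M P S Y u =
     (let h = M *v TOmega_field P S Y u in ((transpose P *v h, S *v h), transpose Y *v h))"

lemma linear_TOmega_field: "linear (TOmega_field P S Y)"
  by (rule linearI) (auto simp: TOmega_field_def matrix_vector_right_distrib
      matrix_vector_mult_scaleR algebra_simps split: prod.splits)

lemma linear_TOmega_inductance: "linear (TOmega_inductance M P S Y)"
  by (rule linearI) (simp_all add: TOmega_inductance_def Let_def linear_add[OF linear_TOmega_field]
      linear_scale[OF linear_TOmega_field] matrix_vector_right_distrib matrix_vector_mult_scaleR)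

lemma inner_TOmega_inductance:
  "u \<bullet> TOmega_inductance M P S Y u = TOmega_field P S Y u \<bullet> (M *v TOmega_field P S Y u)"
  by (cases u) (auto simp: TOmega_inductance_def TOmega_field_def Let_def
      inner_transpose_mult_vec_left inner_transpose_mult_vec_right inner_add_left)

lemma TOmega_field_eq_0_iff:
  fixes C :: "real^'n^'n" and S :: "real^'n^'m" and M\<^sub>\<rho> :: "real^'n^'n"
    and P :: "real^'k^'n" and Y :: "real^'s^'n"
  assumes ker_ST: "{x. transpose S *v x = 0} = {0}"
    and CST: "C ** transpose S = 0"
    and K_reg: "invertible (transpose P ** transpose C ** M\<^sub>\<rho> ** C ** P)"
    and Y_cond: "\<forall>x y. x \<noteq> 0 \<longrightarrow> y \<noteq> 0 \<longrightarrow>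
                   C *v (Y *v x) \<noteq> 0 \<and> C *v (Y *v x) \<noteq> C *v (P *v y)"
  shows "TOmega_field P S Y u = 0 \<longleftrightarrow> u = 0"
proof
  obtain a b c where u: "u = ((a, b), c)"
    by (metis prod.collapse)
  assume field: "TOmega_field P S Y u = 0"
  then have "C *v (P *v a + transpose S *v b + Y *v c) = 0"
    by (simp add: TOmega_field_def u)
  moreover have "C *v (transpose S *v b) = 0"
    by (simp add: matrix_vector_mul_assoc CST)
  ultimately have "C *v (P *v a) + C *v (Y *v c) = 0"
    by (simp add: matrix_vector_right_distrib)
  then have curl: "C *v (Y *v c) = C *v (P *v (- a))"
    by (simp add: vec.neg add_eq_0_iff)
  have c: "c = 0"
  proof (rule ccontr)
    assume "c \<noteq> 0"
    show False
    proof (cases "a = 0")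
      case True
      \<comment> \<open>the first half of Y_cond is only stated for some y \<noteq> 0; y = 1 serves\<close>
      with curl \<open>c \<noteq> 0\<close> Y_cond[rule_format, of c 1] show False by simp
    next
      case False
      then have "- a \<noteq> 0" by simp
      with curl \<open>c \<noteq> 0\<close> Y_cond show False by blast
    qed
  qed
  then have "(transpose P ** transpose C ** M\<^sub>\<rho> ** C ** P) *v a = 0"
    using curl by (simp add: matrix_vector_mul_assoc[symmetric] vec.neg)
  then have a: "a = 0"
    using invertible_mult_vec_eq_0_iff[OF K_reg] by blast
  then have "transpose S *v b = 0"
    using field c by (simp add: TOmega_field_def u)
  then have "b = 0"
    using ker_ST by blast
  then show "u = 0"
    by (simp add: u a c zero_prod_def)
qed (simp add: TOmega_field_def zero_prod_def)

lemma pos_def_map_TOmega_inductance: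
  assumes "\<forall>x. x \<noteq> 0 \<longrightarrow> x \<bullet> (M *v x) > 0"
    and "\<And>u. TOmega_field P S Y u = 0 \<Longrightarrow> u = 0"
  shows "pos_def_map (TOmega_inductance M P S Y)"
  unfolding pos_def_map_def inner_TOmega_inductance using assms by blast

lemma linear_TOmega_DAE: "linear (TOmega_DAE C S M\<^sub>\<mu> M\<^sub>\<rho> P Y)"
  by (rule linearI) (auto simp: TOmega_DAE_def Let_def matrix_vector_right_distrib
      matrix_vector_mult_scaleR algebra_simps split: prod.splits)

lemma TOmega_DAE_jets:
  assumes "TOmega_DAE C S M\<^sub>\<mu> M\<^sub>\<rho> P Y (dx, di, x, i, v, t) = 0"
    and "TOmega_DAE C S M\<^sub>\<mu> M\<^sub>\<rho> P Y (ddx, ddi, dx, di, dv, 1) = 0"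
  shows "TOmega_inductance M\<^sub>\<mu> P S Y (dx, di) =
    ((- ((transpose P ** transpose C ** M\<^sub>\<rho> ** C ** P) *v fst x), 0), v)"
  using assms
  by (cases dx, cases x, cases ddx)
    (simp add: TOmega_DAE_def TOmega_inductance_def TOmega_field_def Let_def zero_prod_def
      eq_neg_iff_add_eq_0 add.commute)

theorem proposition6:
  fixes C :: "real^'n^'n" and S :: "real^'n^'m" and M\<^sub>\<mu> :: "real^'n^'n"
    and M\<^sub>\<rho> :: "real^'n^'n" and P :: "real^'k^'n" and Y :: "real^'s^'n"
  assumes Mmu_sym: "transpose M\<^sub>\<mu> = M\<^sub>\<mu>"
    and Mmu_pd: "\<forall>x. x \<noteq> 0 \<longrightarrow> x \<bullet> (M\<^sub>\<mu> *v x) > 0"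
    and ker_ST: "{x. transpose S *v x = 0} = {0}"
    and CST: "C ** transpose S = 0"
    and ker_S: "{x. S *v x = 0} = range (\<lambda>y. transpose C *v y)"
    and K_reg: "invertible (transpose P ** transpose C ** M\<^sub>\<rho> ** C ** P)"
    and Y_cond: "\<forall>x y. x \<noteq> 0 \<longrightarrow> y \<noteq> 0 \<longrightarrow>
                   C *v (Y *v x) \<noteq> 0 \<and> C *v (Y *v x) \<noteq> C *v (P *v y)"
  shows "inductance_like (TOmega_DAE C S M\<^sub>\<mu> M\<^sub>\<rho> P Y)"
proof (rule inductance_like_if_jets_solve_pos_def_system)
  let ?F = "TOmega_DAE C S M\<^sub>\<mu> M\<^sub>\<rho> P Y"
  have F: "bounded_linear ?F"
    using linear_TOmega_DAE linear_conv_bounded_linear by blast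
  show "linear (TOmega_inductance M\<^sub>\<mu> P S Y)"
    by (rule linear_TOmega_inductance)
  show "pos_def_map (TOmega_inductance M\<^sub>\<mu> P S Y)"
    using pos_def_map_TOmega_inductance Mmu_pd TOmega_field_eq_0_iff[OF ker_ST CST K_reg Y_cond]
    by blast
  show "?F differentiable (at p)" for p
    using F by (rule bounded_linear_imp_differentiable)
  fix dx di x i v t ddx ddi dv
  assume "?F (dx, di, x, i, v, t) = 0"
    and "frechet_derivative ?F (at (dx, di, x, i, v, t)) (ddx, ddi, dx, di, dv, 1) = 0"
  then show "TOmega_inductance M\<^sub>\<mu> P S Y (dx, di) =
      ((- ((transpose P ** transpose C ** M\<^sub>\<rho> ** C ** P) *v fst x), 0), v)"
    using frechet_derivative_at[OF bounded_linear_imp_has_derivative[OF F]] TOmega_DAE_jets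
    by metis
qed

end
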